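(* Let $G_l$ be a graph of order $n_l$, maximum degree $\Delta_l$ and minimum degree $\delta_l$, $l\in\{1,2\}$. Then for $i,j\in\{1,2\}$ with $i\neq j$ and every integer $k\in\{2-\delta_j-\Delta_i,\dots,\Delta_i-\delta_j\}$, $$\phi_k^o(G_1\times G_2)\ge n_j\,\phi_{k+\delta_j}^o(G_i).$$
   Context: All graphs are finite and simple. For a graph $G=(V,E)$, a set $S\subseteq V$ and $v\in V$, let $\delta_S(v)=|\{u\in S: uv\in E\}|$, $\overline{S}=V\setminus S$, and let $\partial S$ be the set of vertices of $\overline S$ adjacent to at least one vertex of $S$. For an integer $k$, a non-empty set $S\subseteq V$ is an offensive $k$-alliance if $\delta_S(v)\ge \delta_{\overline S}(v)+k$ for every $v\in \partial S$. A set $X\subseteq V$ is an offensive $k$-alliance free set ($k$-oaf set) if no offensive $k$-alliance $S$ satisfies $S\subseteq X$. $\phi_k^o(G)$ denotes the maximum cardinality of a $k$-oaf set in $G$. The Cartesian product $G_1\times G_2$ of $G_1=(V_1,E_1)$, $G_2=(V_2,E_2)$ has vertex set $V_1\times V_2$, with $(a,b)$ adjacent to $(c,d)$ iff either $a=c$ and $bd\in E_2$, or $b=d$ and $ac\in E_1$. *)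

theory Defs
  imports Main
begin

definition graph :: "'a set \<Rightarrow> ('a \<Rightarrow> 'a \<Rightarrow> bool) \<Rightarrow> bool" where
  "graph V E \<longleftrightarrow> finite V \<and> (\<forall>u v. E u v \<longrightarrow> u \<in> V \<and> v \<in> V)
     \<and> (\<forall>u v. E u v \<longrightarrow> E v u) \<and> (\<forall>v. \<not> E v v)"

definition deg :: "'a set \<Rightarrow> ('a \<Rightarrow> 'a \<Rightarrow> bool) \<Rightarrow> 'a \<Rightarrow> nat" where
  "deg V E v = card {u \<in> V. E v u}"

definition maxdeg :: "'a set \<Rightarrow> ('a \<Rightarrow> 'a \<Rightarrow> bool) \<Rightarrow> nat" where
  "maxdeg V E = Max (deg V E ` V)"

definition mindeg :: "'a set \<Rightarrow> ('a \<Rightarrow> 'a \<Rightarrow> bool) \<Rightarrow> nat" where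
  "mindeg V E = Min (deg V E ` V)"

definition nbr_in :: "('a \<Rightarrow> 'a \<Rightarrow> bool) \<Rightarrow> 'a set \<Rightarrow> 'a \<Rightarrow> nat" where
  "nbr_in E S v = card {u \<in> S. E v u}"

definition boundary :: "'a set \<Rightarrow> ('a \<Rightarrow> 'a \<Rightarrow> bool) \<Rightarrow> 'a set \<Rightarrow> 'a set" where
  "boundary V E S = {v \<in> V - S. \<exists>u \<in> S. E v u}"

definition off_alliance :: "'a set \<Rightarrow> ('a \<Rightarrow> 'a \<Rightarrow> bool) \<Rightarrow> int \<Rightarrow> 'a set \<Rightarrow> bool" where
  "off_alliance V E k S \<longleftrightarrow> S \<noteq> {} \<and> S \<subseteq> V \<and>
     (\<forall>v \<in> boundary V E S. int (nbr_in E S v) \<ge> int (nbr_in E (V - S) v) + k)"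

definition oaf :: "'a set \<Rightarrow> ('a \<Rightarrow> 'a \<Rightarrow> bool) \<Rightarrow> int \<Rightarrow> 'a set \<Rightarrow> bool" where
  "oaf V E k X \<longleftrightarrow> X \<subseteq> V \<and> \<not> (\<exists>S. S \<subseteq> X \<and> off_alliance V E k S)"

text \<open>\<phi>^o_k(G): maximum cardinality of a k-oaf set (the empty set is always k-oaf).\<close>
definition phi_o :: "'a set \<Rightarrow> ('a \<Rightarrow> 'a \<Rightarrow> bool) \<Rightarrow> int \<Rightarrow> nat" where
  "phi_o V E k = Max (card ` {X. oaf V E k X})"

text \<open>Edge relation of the Cartesian product; vertex set is V1 \<times> V2.\<close>
definition prodE :: "('a \<Rightarrow> 'a \<Rightarrow> bool) \<Rightarrow> ('b \<Rightarrow> 'b \<Rightarrow> bool) \<Rightarrow> ('a \<times> 'b) \<Rightarrow> ('a \<times> 'b) \<Rightarrow> bool" where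
  "prodE E1 E2 x y \<longleftrightarrow> (fst x = fst y \<and> E2 (snd x) (snd y)) \<or> (snd x = snd y \<and> E1 (fst x) (fst y))"

end

theory Submission
  imports Defs
begin

(* Let X be an offensive (k + \<delta>_2)-alliance free set of G_1. *)

text \<open>The empty set is k-oaf, so \<phi>^o is a maximum over a non-empty set.\<close>

lemma oaf_empty: "oaf V E k {}"
  by (auto simp: oaf_def off_alliance_def)

lemma finite_card_oaf:
  assumes "finite V"
  shows "finite (card ` {X. oaf V E k X})"
proof -
  have "card ` {X. oaf V E k X} \<subseteq> card ` Pow V" by (auto simp: oaf_def)
  then show ?thesis using assms by (meson finite_Pow_iff finite_imageI finite_subset)
qed

lemma card_oaf_le_phi_o:
  assumes "finite V" "oaf V E k X"
  shows "card X \<le> phi_o V E k"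
  unfolding phi_o_def using assms by (intro Max_ge[OF finite_card_oaf]) auto

lemma phi_o_attained:
  assumes "finite V"
  obtains X where "oaf V E k X" "card X = phi_o V E k"
proof -
  have "card ` {X. oaf V E k X} \<noteq> {}" using oaf_empty by blast
  then have "phi_o V E k \<in> card ` {X. oaf V E k X}"
    unfolding phi_o_def using finite_card_oaf[OF assms] by (rule Max_in[rotated])
  then show ?thesis using that by auto
qed

lemma phi_o_lift:
  assumes "finite V" "finite W"
    and lift: "\<And>X. oaf V E l X \<Longrightarrow> oaf W F k (g X) \<and> card (g X) = c * card X"
  shows "c * phi_o V E l \<le> phi_o W F k"
proof -
  obtain X where X: "oaf V E l X" "card X = phi_o V E l"
    using phi_o_attained[OF assms(1)] .
  then have "c * phi_o V E l = card (g X)" using lift by simp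
  also have "\<dots> \<le> phi_o W F k" using lift[OF X(1)] card_oaf_le_phi_o[OF assms(2)] by blast
  finally show ?thesis .
qed

lemma mindeg_le_deg:
  assumes "graph V E" "b \<in> V"
  shows "mindeg V E \<le> deg V E b"
  using assms unfolding mindeg_def graph_def by (intro Min_le) auto

text \<open>If S avoids the whole column of a, the S-neighbours of (a, b) lie in the row of b,
  above S-projected neighbours of a in G_1.\<close>

lemma nbr_in_prod_le:
  assumes fin: "finite (fst ` S)" and column_free: "\<And>y. (a, y) \<notin> S"
  shows "nbr_in (prodE E1 E2) S (a, b) \<le> nbr_in E1 (fst ` S) a"
proof -
  have "{u \<in> S. prodE E1 E2 (a, b) u} \<subseteq> (\<lambda>x. (x, b)) ` {x \<in> fst ` S. E1 a x}"
  proof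
    fix u assume u: "u \<in> {u \<in> S. prodE E1 E2 (a, b) u}"
    then have "fst u \<noteq> a" using column_free by (metis (mono_tags, lifting) mem_Collect_eq prod.collapse)
    with u show "u \<in> (\<lambda>x. (x, b)) ` {x \<in> fst ` S. E1 a x}"
      by (auto simp: prodE_def image_iff intro!: exI[of _ "fst u"])
  qed
  then have "nbr_in (prodE E1 E2) S (a, b) \<le> card ((\<lambda>x. (x, b)) ` {x \<in> fst ` S. E1 a x})"
    unfolding nbr_in_def using fin by (intro card_mono) auto
  also have "\<dots> \<le> nbr_in E1 (fst ` S) a"
    unfolding nbr_in_def by (rule card_image_le) (use fin in auto)
  finally show ?thesis .
qed

text \<open>Outside S, the vertex (a, b) sees the row neighbours (x, b) with x \<notin> fst ` S and
  its whole column neighbourhood, which are disjoint.\<close>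

lemma nbr_in_prod_compl_ge:
  assumes g1: "graph V1 E1" and g2: "graph V2 E2" and "a \<in> V1" "b \<in> V2"
    and column_free: "\<And>y. (a, y) \<notin> S"
  shows "nbr_in E1 (V1 - fst ` S) a + deg V2 E2 b \<le> nbr_in (prodE E1 E2) (V1 \<times> V2 - S) (a, b)"
proof -
  let ?R = "(\<lambda>x. (x, b)) ` {x \<in> V1 - fst ` S. E1 a x}"
  let ?C = "(\<lambda>y. (a, y)) ` {y \<in> V2. E2 b y}"
  have f1: "finite V1" and f2: "finite V2" and irrefl: "\<not> E1 a a"
    using g1 g2 by (auto simp: graph_def)
  have "?R \<inter> ?C = {}" using irrefl by auto
  then have "card (?R \<union> ?C) = card ?R + card ?C" using f1 f2 by (intro card_Un_disjoint) auto
  moreover have "card ?R = nbr_in E1 (V1 - fst ` S) a"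
    unfolding nbr_in_def by (rule card_image) (auto simp: inj_on_def)
  moreover have "card ?C = deg V2 E2 b"
    unfolding deg_def by (rule card_image) (auto simp: inj_on_def)
  moreover have "?R \<union> ?C \<subseteq> {u \<in> V1 \<times> V2 - S. prodE E1 E2 (a, b) u}"
    using \<open>a \<in> V1\<close> \<open>b \<in> V2\<close> column_free g1 g2 by (auto simp: prodE_def graph_def image_iff)
  then have "card (?R \<union> ?C) \<le> nbr_in (prodE E1 E2) (V1 \<times> V2 - S) (a, b)"
    unfolding nbr_in_def using f1 f2 by (intro card_mono) auto
  ultimately show ?thesis by simp
qed

lemma oaf_product_column:
  assumes g1: "graph V1 E1" and g2: "graph V2 E2"
    and X: "oaf V1 E1 (k + int (mindeg V2 E2)) X"
  shows "oaf (V1 \<times> V2) (prodE E1 E2) k (X \<times> V2)"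
proof -
  have XV: "X \<subseteq> V1" using X by (simp add: oaf_def)
  have False if SX: "S \<subseteq> X \<times> V2" and alliance: "off_alliance (V1 \<times> V2) (prodE E1 E2) k S" for S
  proof -
    define A where "A = fst ` S"
    have "A \<subseteq> X" "A \<noteq> {}" using SX alliance by (auto simp: A_def off_alliance_def)
    then have "\<not> off_alliance V1 E1 (k + int (mindeg V2 E2)) A" using X by (auto simp: oaf_def)
    then obtain a where "a \<in> boundary V1 E1 A"
      and violated: "int (nbr_in E1 A a) < int (nbr_in E1 (V1 - A) a) + (k + int (mindeg V2 E2))"
      using \<open>A \<subseteq> X\<close> \<open>A \<noteq> {}\<close> XV by (auto simp: off_alliance_def not_le)
    then obtain a' where a: "a \<in> V1" "a \<notin> A" "a' \<in> A" "E1 a a'" by (auto simp: boundary_def)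
    then obtain b where ab': "(a', b) \<in> S" by (auto simp: A_def)
    then have b: "b \<in> V2" using SX by auto
    have column_free: "\<And>y. (a, y) \<notin> S" using a(2) by (force simp: A_def)
    have "(a, b) \<in> boundary (V1 \<times> V2) (prodE E1 E2) S"
      unfolding boundary_def using a b column_free ab' by (auto simp: prodE_def intro!: bexI[of _ "(a', b)"])
    then have "int (nbr_in (prodE E1 E2) (V1 \<times> V2 - S) (a, b)) + k \<le> int (nbr_in (prodE E1 E2) S (a, b))"
      using alliance by (auto simp: off_alliance_def)
    moreover have "nbr_in (prodE E1 E2) S (a, b) \<le> nbr_in E1 A a"
    proof -
      have "finite X" using XV g1 by (auto simp: graph_def intro: finite_subset)
      then have "finite A" using \<open>A \<subseteq> X\<close> by (rule finite_subset[rotated])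
      then show ?thesis unfolding A_def using column_free by (rule nbr_in_prod_le)
    qed
    moreover have "nbr_in E1 (V1 - A) a + deg V2 E2 b \<le> nbr_in (prodE E1 E2) (V1 \<times> V2 - S) (a, b)"
      unfolding A_def using nbr_in_prod_compl_ge[OF g1 g2 a(1) b column_free] .
    moreover have "mindeg V2 E2 \<le> deg V2 E2 b" using mindeg_le_deg[OF g2 b] .
    ultimately show False using violated by linarith
  qed
  then show ?thesis using XV by (auto simp: oaf_def)
qed

locale graph_embedding =
  fixes V :: "'a set" and E :: "'a \<Rightarrow> 'a \<Rightarrow> bool" and F :: "'b \<Rightarrow> 'b \<Rightarrow> bool" and f :: "'a \<Rightarrow> 'b"
  assumes inj: "inj_on f V"
    and edges: "\<And>x y. x \<in> V \<Longrightarrow> y \<in> V \<Longrightarrow> F (f x) (f y) = E x y"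
begin

lemma nbr_in_image:
  assumes "S \<subseteq> V" "v \<in> V"
  shows "nbr_in F (f ` S) (f v) = nbr_in E S v"
proof -
  have "{u \<in> f ` S. F (f v) u} = f ` {u \<in> S. E v u}"
    using assms edges by auto
  moreover have "inj_on f {u \<in> S. E v u}" using inj assms(1) by (auto intro: inj_on_subset)
  ultimately show ?thesis unfolding nbr_in_def by (simp add: card_image)
qed

lemma image_diff: "S \<subseteq> V \<Longrightarrow> f ` V - f ` S = f ` (V - S)"
  using inj by (simp add: inj_on_image_set_diff)

lemma boundary_image:
  assumes "S \<subseteq> V"
  shows "boundary (f ` V) F (f ` S) = f ` boundary V E S"
  unfolding boundary_def image_diff[OF assms] using assms edges by fastforce

lemma off_alliance_image:
  assumes "S \<subseteq> V" "off_alliance (f ` V) F k (f ` S)"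
  shows "off_alliance V E k S"
proof -
  have "int (nbr_in E (V - S) v) + k \<le> int (nbr_in E S v)" if "v \<in> boundary V E S" for v
  proof -
    have v: "v \<in> V" using that by (simp add: boundary_def)
    have "f v \<in> boundary (f ` V) F (f ` S)" using that boundary_image[OF assms(1)] by simp
    then have "int (nbr_in F (f ` V - f ` S) (f v)) + k \<le> int (nbr_in F (f ` S) (f v))"
      using assms(2) by (simp add: off_alliance_def)
    then show ?thesis using nbr_in_image[OF _ v] assms(1) by (simp add: image_diff)
  qed
  then show ?thesis using assms by (auto simp: off_alliance_def)
qed

lemma oaf_image:
  assumes "oaf V E k X"
  shows "oaf (f ` V) F k (f ` X)"
proof -
  have XV: "X \<subseteq> V" using assms by (simp add: oaf_def)
  have False if "S \<subseteq> f ` X" "off_alliance (f ` V) F k S" for S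
  proof -
    define T where "T = X \<inter> f -` S"
    have "S = f ` T" using \<open>S \<subseteq> f ` X\<close> by (auto simp: T_def)
    then have "off_alliance V E k T" using that XV by (intro off_alliance_image) (auto simp: T_def)
    then show False using assms by (auto simp: oaf_def T_def)
  qed
  then show ?thesis using XV by (auto simp: oaf_def)
qed

end

lemma prodE_swap: "prodE E2 E1 (prod.swap u) (prod.swap v) = prodE E1 E2 u v"
  by (auto simp: prodE_def)

lemma oaf_product_row:
  assumes g1: "graph V1 E1" and g2: "graph V2 E2"
    and X: "oaf V2 E2 (k + int (mindeg V1 E1)) X"
  shows "oaf (V1 \<times> V2) (prodE E1 E2) k (V1 \<times> X)"
proof -
  interpret graph_embedding "V2 \<times> V1" "prodE E2 E1" "prodE E1 E2" prod.swap
    by unfold_locales (auto simp: prodE_swap)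
  have "oaf (prod.swap ` (V2 \<times> V1)) (prodE E1 E2) k (prod.swap ` (X \<times> V1))"
    using oaf_image[OF oaf_product_column[OF g2 g1 X]] .
  then show ?thesis by (simp add: product_swap)
qed

theorem corollary3:
  fixes V1 :: "'a set" and E1 :: "'a \<Rightarrow> 'a \<Rightarrow> bool"
    and V2 :: "'b set" and E2 :: "'b \<Rightarrow> 'b \<Rightarrow> bool"
  assumes "graph V1 E1" and "graph V2 E2" and "V1 \<noteq> {}" and "V2 \<noteq> {}"
  shows "(\<forall>k::int. 2 - int (mindeg V2 E2) - int (maxdeg V1 E1) \<le> k \<and> k \<le> int (maxdeg V1 E1) - int (mindeg V2 E2)
            \<longrightarrow> phi_o (V1 \<times> V2) (prodE E1 E2) k \<ge> card V2 * phi_o V1 E1 (k + int (mindeg V2 E2)))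
       \<and> (\<forall>k::int. 2 - int (mindeg V1 E1) - int (maxdeg V2 E2) \<le> k \<and> k \<le> int (maxdeg V2 E2) - int (mindeg V1 E1)
            \<longrightarrow> phi_o (V1 \<times> V2) (prodE E1 E2) k \<ge> card V1 * phi_o V2 E2 (k + int (mindeg V1 E1)))"
proof -
  have f1: "finite V1" and f2: "finite V2" using assms(1,2) by (auto simp: graph_def)
  have column: "card V2 * phi_o V1 E1 (k + int (mindeg V2 E2)) \<le> phi_o (V1 \<times> V2) (prodE E1 E2) k" for k
    using f1 f2 oaf_product_column[OF assms(1,2)]
    by (intro phi_o_lift[where g = "\<lambda>X. X \<times> V2"]) (auto simp: card_cartesian_product)
  have row: "card V1 * phi_o V2 E2 (k + int (mindeg V1 E1)) \<le> phi_o (V1 \<times> V2) (prodE E1 E2) k" for k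
    using f1 f2 oaf_product_row[OF assms(1,2)]
    by (intro phi_o_lift[where g = "\<lambda>X. V1 \<times> X"]) (auto simp: card_cartesian_product)
  show ?thesis using column row by blast
qed

end
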